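(* The collinearity graph of $\mathbb{S}$ is connected and has diameter $3$.
   Context: Let $S=(P,L)$ and $S'=(P',L')$ be generalized quadrangles of order $(2,2)$ (every line has 3 points, every point lies on 3 lines, and for each point $x$ and line $l\not\ni x$ exactly one point of $l$ is collinear with $x$), with an isomorphism $x\mapsto x'$ from $S$ to $S'$. In a point-line geometry, $x^{\perp}$ is $x$ together with all points collinear with $x$, and $A^{\perp}=\bigcap_{a\in A}a^{\perp}$. A triad is a set of three pairwise non-collinear points, complete if $|T^{\perp}|=3$. Let $\mathcal{P}=\{(x,y')\in P\times P':y'\in x'^{\perp}\}$ and $\mathcal{L}$ the set of all $3$-subsets $\{(x,u'),(y,v'),(z,w')\}$ of $\mathcal{P}$ where $T=\{x,y,z\}$ (three distinct points) is a line or complete triad of $S$ and $\{u',v',w'\}=T'^{\perp}$ in $S'$ with $u',v',w'$ distinct. The geometry $\mathbb{S}=(\mathbb{P},\mathbb{L})$ has point set $\mathbb{P}=\mathcal{P}\cup P\cup P'$ (disjoint union) and line set $\mathcal{L}\cup\{\{x,(x,u'),u'\}:(x,u')\in\mathcal{P}\}$. *)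

theory Defs
  imports Main
begin

definition collinear :: "'a set set \<Rightarrow> 'a \<Rightarrow> 'a \<Rightarrow> bool" where
  "collinear L x y \<longleftrightarrow> (\<exists>l\<in>L. x \<in> l \<and> y \<in> l)"

definition perp :: "'a set \<Rightarrow> 'a set set \<Rightarrow> 'a \<Rightarrow> 'a set" where
  "perp P L x = insert x {y \<in> P. collinear L x y}"

definition perp_set :: "'a set \<Rightarrow> 'a set set \<Rightarrow> 'a set \<Rightarrow> 'a set" where
  "perp_set P L A = {y \<in> P. \<forall>a\<in>A. y \<in> perp P L a}"

definition triad :: "'a set \<Rightarrow> 'a set set \<Rightarrow> 'a set \<Rightarrow> bool" where
  "triad P L T \<longleftrightarrow> T \<subseteq> P \<and> card T = 3 \<and>
     (\<forall>a\<in>T. \<forall>b\<in>T. a \<noteq> b \<longrightarrow> \<not> collinear L a b)"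

definition complete_triad :: "'a set \<Rightarrow> 'a set set \<Rightarrow> 'a set \<Rightarrow> bool" where
  "complete_triad P L T \<longleftrightarrow> triad P L T \<and> card (perp_set P L T) = 3"

definition gq22 :: "'a set \<Rightarrow> 'a set set \<Rightarrow> bool" where
  "gq22 P L \<longleftrightarrow> P \<noteq> {} \<and>
     (\<forall>l\<in>L. l \<subseteq> P \<and> card l = 3) \<and>
     (\<forall>x\<in>P. card {l\<in>L. x \<in> l} = 3) \<and>
     (\<forall>x\<in>P. \<forall>l\<in>L. x \<notin> l \<longrightarrow> (\<exists>!y. y \<in> l \<and> collinear L x y))"

definition gq_iso :: "('a \<Rightarrow> 'b) \<Rightarrow> 'a set \<Rightarrow> 'a set set \<Rightarrow> 'b set \<Rightarrow> 'b set set \<Rightarrow> bool" where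
  "gq_iso f P L P' L' \<longleftrightarrow> bij_betw f P P' \<and> (\<lambda>l. f ` l) ` L = L'"

text \<open>Points of the new geometry: disjoint union of the pairs, P and P'.\<close>
datatype ('a, 'b) bpt = BPair 'a 'b | BLeft 'a | BRight 'b

definition calP :: "('a \<Rightarrow> 'b) \<Rightarrow> 'a set \<Rightarrow> 'b set \<Rightarrow> 'b set set \<Rightarrow> ('a \<times> 'b) set" where
  "calP f P P' L' = {(x, y). x \<in> P \<and> y \<in> P' \<and> y \<in> perp P' L' (f x)}"

definition calL :: "('a \<Rightarrow> 'b) \<Rightarrow> 'a set \<Rightarrow> 'a set set \<Rightarrow> 'b set \<Rightarrow> 'b set set
    \<Rightarrow> ('a \<times> 'b) set set" where
  "calL f P L P' L' = {{(x, u), (y, v), (z, w)} | x y z u v w.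
     (x, u) \<in> calP f P P' L' \<and> (y, v) \<in> calP f P P' L' \<and> (z, w) \<in> calP f P P' L' \<and>
     x \<noteq> y \<and> x \<noteq> z \<and> y \<noteq> z \<and>
     ({x, y, z} \<in> L \<or> complete_triad P L {x, y, z}) \<and>
     u \<noteq> v \<and> u \<noteq> w \<and> v \<noteq> w \<and>
     {u, v, w} = perp_set P' L' (f ` {x, y, z})}"

definition bbP :: "('a \<Rightarrow> 'b) \<Rightarrow> 'a set \<Rightarrow> 'b set \<Rightarrow> 'b set set \<Rightarrow> ('a, 'b) bpt set" where
  "bbP f P P' L' = (\<lambda>(x, y). BPair x y) ` calP f P P' L' \<union> BLeft ` P \<union> BRight ` P'"

definition bbL :: "('a \<Rightarrow> 'b) \<Rightarrow> 'a set \<Rightarrow> 'a set set \<Rightarrow> 'b set \<Rightarrow> 'b set set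
    \<Rightarrow> ('a, 'b) bpt set set" where
  "bbL f P L P' L' =
     (\<lambda>S. (\<lambda>(x, y). BPair x y) ` S) ` calL f P L P' L' \<union>
     {{BLeft x, BPair x u, BRight u} | x u. (x, u) \<in> calP f P P' L'}"

definition coll_graph :: "'a set \<Rightarrow> 'a set set \<Rightarrow> ('a \<times> 'a) set" where
  "coll_graph P L = {(a, b). a \<in> P \<and> b \<in> P \<and> a \<noteq> b \<and> collinear L a b}"

definition graph_connected :: "'a set \<Rightarrow> ('a \<times> 'a) set \<Rightarrow> bool" where
  "graph_connected V E \<longleftrightarrow> (\<forall>a\<in>V. \<forall>b\<in>V. (a, b) \<in> E\<^sup>*)"

definition dist_le :: "('a \<times> 'a) set \<Rightarrow> nat \<Rightarrow> 'a \<Rightarrow> 'a \<Rightarrow> bool" where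
  "dist_le E n a b \<longleftrightarrow> (\<exists>k\<le>n. (a, b) \<in> E ^^ k)"

definition graph_diameter :: "'a set \<Rightarrow> ('a \<times> 'a) set \<Rightarrow> nat \<Rightarrow> bool" where
  "graph_diameter V E d \<longleftrightarrow> (\<forall>a\<in>V. \<forall>b\<in>V. dist_le E d a b) \<and>
     (\<exists>a\<in>V. \<exists>b\<in>V. \<not> dist_le E (d - 1) a b)"

end

theory Submission
  imports Defs
begin

text \<open>
  Each line \<open>{x, (x,u), u}\<close> makes x adjacent to u exactly when f x and u are collinear, and
  any two points of a generalized quadrangle have a common neighbour; so two points of P, or
  two points of P', are at distance at most 2. Every point of the new geometry is within
  distance 1 of a point of P and of a point of P', which bounds all distances by 3 except
  between two pairs (x,u) and (y,v). Such pairs are joined through a pair (a,b), where b is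
  a common neighbour of f x and f y and f a one of u, v and b: three points of GQ(2,2) always
  have a common neighbour, because every triad has a centre. Two pairs (x,u) and (a,b) with
  u, b collinear with f x and f a lie on a common line, since in GQ(2,2), all of whose points
  are regular, \<open>{f x, f a}\<close> extends to a line or a complete triad with perp \<open>{u, b, c}\<close>.
  Conversely the neighbours of x are just the pairs (x,v) and the points v collinear with f x,
  so x and a point u not collinear with f x are at distance 3.
\<close>

lemma card_3_obtain_other:
  assumes "card A = 3"
  obtains c where "c \<in> A" "c \<noteq> a" "c \<noteq> b"
proof -
  have "card {a, b} < card A" using assms by (simp add: card_insert_if)
  then have "\<not> A \<subseteq> {a, b}" using card_mono[of "{a, b}" A] by fastforce
  then show ?thesis using that by blast
qed

lemma card_3_eq:
  assumes "card A = 3" "a \<in> A" "b \<in> A" "c \<in> A" "a \<noteq> b" "a \<noteq> c" "b \<noteq> c"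
  shows "A = {a, b, c}"
proof -
  have "finite A" using assms(1) by (intro card_ge_0_finite) simp
  then show ?thesis using assms by (intro card_subset_eq[symmetric]) auto
qed

lemma collinearI: "l \<in> L \<Longrightarrow> x \<in> l \<Longrightarrow> y \<in> l \<Longrightarrow> collinear L x y"
  unfolding collinear_def by blast

lemma collinearE:
  assumes "collinear L x y"
  obtains l where "l \<in> L" "x \<in> l" "y \<in> l"
  using assms unfolding collinear_def by blast

lemma collinear_commute: "collinear L x y \<longleftrightarrow> collinear L y x"
  unfolding collinear_def by blast

lemma coll_graphI:
  "a \<in> V \<Longrightarrow> b \<in> V \<Longrightarrow> a \<noteq> b \<Longrightarrow> l \<in> L \<Longrightarrow> a \<in> l \<Longrightarrow> b \<in> l \<Longrightarrow> (a, b) \<in> coll_graph V L"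
  unfolding coll_graph_def collinear_def by blast

lemma sym_coll_graph: "sym (coll_graph V L)"
  unfolding coll_graph_def collinear_def by (auto intro: symI)

lemma dist_le_refl: "dist_le E n a a"
  unfolding dist_le_def by (auto intro: exI[of _ 0])

lemma dist_le_mono: "dist_le E m a b \<Longrightarrow> m \<le> n \<Longrightarrow> dist_le E n a b"
  unfolding dist_le_def using order_trans by blast

lemma dist_le_edge: "(a, b) \<in> E \<Longrightarrow> dist_le E 1 a b"
  unfolding dist_le_def by (auto intro: exI[of _ 1])

lemma dist_le_trans:
  assumes "dist_le E m a b" "dist_le E n b c" "m + n \<le> k"
  shows "dist_le E k a c"
proof -
  obtain i j where "i \<le> m" "(a, b) \<in> E ^^ i" "j \<le> n" "(b, c) \<in> E ^^ j"
    using assms(1,2) unfolding dist_le_def by blast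
  then have "(a, c) \<in> E ^^ (i + j)" and "i + j \<le> k" using relpow_trans assms(3) by auto
  then show ?thesis unfolding dist_le_def by blast
qed

lemma dist_le_path2:
  assumes "(a, b) \<in> E" "(b, c) \<in> E"
  shows "dist_le E 2 a c"
  using dist_le_trans[OF dist_le_edge[OF assms(1)] dist_le_edge[OF assms(2)]] by simp

lemma dist_le_path3:
  assumes "(a, b) \<in> E" "(b, c) \<in> E" "(c, d) \<in> E"
  shows "dist_le E 3 a d"
  using dist_le_trans[OF dist_le_path2[OF assms(1,2)] dist_le_edge[OF assms(3)]] by simp

lemma relpow_sym:
  assumes "sym E" "(a, b) \<in> E ^^ n"
  shows "(b, a) \<in> E ^^ n"
  using assms(2)
proof (induction n arbitrary: b)
  case 0
  then show ?case by simp
next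
  case (Suc n)
  from Suc.prems obtain c where "(a, c) \<in> E ^^ n" "(c, b) \<in> E" by (rule relpow_Suc_E)
  then have "(b, c) \<in> E" "(c, a) \<in> E ^^ n" using symD[OF assms(1)] Suc.IH by auto
  then show ?case by (rule relpow_Suc_I2)
qed

lemma dist_le_sym:
  assumes "sym E" "dist_le E n a b"
  shows "dist_le E n b a"
proof -
  obtain k where "k \<le> n" "(a, b) \<in> E ^^ k" using assms(2) unfolding dist_le_def by blast
  then show ?thesis unfolding dist_le_def using relpow_sym[OF assms(1)] by blast
qed

lemma graph_connected_if_dist_le:
  "(\<And>a b. a \<in> V \<Longrightarrow> b \<in> V \<Longrightarrow> dist_le E n a b) \<Longrightarrow> graph_connected V E"
  unfolding graph_connected_def dist_le_def using relpow_imp_rtrancl by blast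

locale gq =
  fixes P :: "'a set" and L :: "'a set set"
  assumes gq22: "gq22 P L"
begin

lemma line_subset: "l \<in> L \<Longrightarrow> l \<subseteq> P"
  using gq22 by (simp add: gq22_def)

lemma card_line: "l \<in> L \<Longrightarrow> card l = 3"
  using gq22 by (simp add: gq22_def)

lemma card_lines_through: "x \<in> P \<Longrightarrow> card {l \<in> L. x \<in> l} = 3"
  using gq22 by (simp add: gq22_def)

lemma ex1_collinear_on_line:
  "x \<in> P \<Longrightarrow> l \<in> L \<Longrightarrow> x \<notin> l \<Longrightarrow> \<exists>!y. y \<in> l \<and> collinear L x y"
  using gq22 by (simp add: gq22_def)

lemma collinear_in_P:
  assumes "collinear L x y" shows "x \<in> P" "y \<in> P"
proof -
  obtain l where "l \<in> L" "x \<in> l" "y \<in> l" using assms by (rule collinearE)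
  then show "x \<in> P" "y \<in> P" using line_subset by blast+
qed

lemma ex_line_through:
  assumes "x \<in> P" obtains l where "l \<in> L" "x \<in> l"
proof -
  have "{l \<in> L. x \<in> l} \<noteq> {}" using card_lines_through[OF assms] by force
  then show ?thesis using that by blast
qed

lemma collinear_refl: "x \<in> P \<Longrightarrow> collinear L x x"
  by (meson ex_line_through collinearI)

lemma collinear_on_line_unique:
  assumes "l \<in> L" "x \<notin> l" "y \<in> l" "y' \<in> l" "collinear L x y" "collinear L x y'"
  shows "y = y'"
proof -
  have "x \<in> P" using assms(5) by (rule collinear_in_P)
  then have "\<exists>!y. y \<in> l \<and> collinear L x y" using assms(1,2) by (rule ex1_collinear_on_line)
  then show ?thesis using assms(3-6) by blast
qed

lemma mem_line_if_collinear_with_two: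
  "\<lbrakk>l \<in> L; p \<in> l; q \<in> l; p \<noteq> q; collinear L w p; collinear L w q\<rbrakk> \<Longrightarrow> w \<in> l"
  using collinear_on_line_unique by blast

lemma ex_collinear_on_line:
  assumes "l \<in> L" "x \<in> P"
  obtains y where "y \<in> l" "collinear L x y"
proof (cases "x \<in> l")
  case True
  then show ?thesis using that collinear_refl[OF assms(2)] by blast
next
  case False
  then show ?thesis using that ex1_collinear_on_line[OF assms(2,1)] by blast
qed

lemma line_eq_if_two_common_points:
  assumes l: "l \<in> L" and m: "m \<in> L" and "p \<noteq> q" "p \<in> l" "q \<in> l" "p \<in> m" "q \<in> m"
  shows "l = m"
proof -
  have "m \<subseteq> l"
    using assms mem_line_if_collinear_with_two[OF l _ _ \<open>p \<noteq> q\<close>] collinearI[OF m] by blast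
  moreover have "finite l" using card_line[OF l] by (intro card_ge_0_finite) simp
  ultimately show ?thesis using card_subset_eq[of l m] card_line[OF l] card_line[OF m] by simp
qed

lemma common_neighbours_noncollinear:
  assumes "\<not> collinear L x y" and "collinear L a x" "collinear L a y"
    and "collinear L b x" "collinear L b y" and "a \<noteq> b"
  shows "\<not> collinear L a b"
proof
  assume "collinear L a b"
  then obtain l where l: "l \<in> L" "a \<in> l" "b \<in> l" by (rule collinearE)
  have "x \<in> l" "y \<in> l"
    using mem_line_if_collinear_with_two[OF l \<open>a \<noteq> b\<close>] assms(2-5)
    by (simp_all add: collinear_commute)
  then show False using assms(1) collinearI[OF l(1)] by blast
qed

lemma ex_common_neighbour:
  assumes "x \<in> P" "y \<in> P"
  obtains w where "collinear L x w" "collinear L y w"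
proof -
  obtain l where l: "l \<in> L" "y \<in> l" using ex_line_through[OF assms(2)] .
  obtain w where w: "w \<in> l" "collinear L x w" using ex_collinear_on_line[OF l(1) assms(1)] .
  have "collinear L y w" using collinearI[OF l(1) l(2) w(1)] .
  with w(2) show ?thesis by (rule that)
qed

definition projection :: "'a \<Rightarrow> 'a set \<Rightarrow> 'a" where
  "projection y l = (THE w. w \<in> l \<and> collinear L y w)"

lemma projection:
  assumes "y \<in> P" "l \<in> L" "y \<notin> l"
  shows "projection y l \<in> l" "collinear L y (projection y l)"
proof -
  have "\<exists>!w. w \<in> l \<and> collinear L y w" using assms by (rule ex1_collinear_on_line)
  then have "projection y l \<in> l \<and> collinear L y (projection y l)"
    unfolding projection_def by (rule theI')
  then show "projection y l \<in> l" "collinear L y (projection y l)" by auto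
qed

lemma card_common_neighbours:
  assumes x: "x \<in> P" and y: "y \<in> P" and xy: "\<not> collinear L x y"
  shows "card {w. collinear L x w \<and> collinear L y w} = 3"
proof -
  have "y \<notin> l" if "l \<in> L" "x \<in> l" for l using xy collinearI[OF that] by blast
  then have proj: "projection y l \<in> l" "collinear L y (projection y l)"
    if "l \<in> {l \<in> L. x \<in> l}" for l
    using projection[OF y] that by auto
  have "inj_on (projection y) {l \<in> L. x \<in> l}"
  proof (rule inj_onI)
    fix l m assume l: "l \<in> {l \<in> L. x \<in> l}" and m: "m \<in> {l \<in> L. x \<in> l}"
      and eq: "projection y l = projection y m"
    have "projection y l \<noteq> x" using proj(2)[OF l] xy by (auto simp: collinear_commute)
    moreover have "projection y l \<in> l" "projection y l \<in> m"
      using proj(1)[OF l] proj(1)[OF m] eq by simp_all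
    ultimately show "l = m"
      using line_eq_if_two_common_points[of l m x "projection y l"] l m by simp
  qed
  moreover have "projection y ` {l \<in> L. x \<in> l} = {w. collinear L x w \<and> collinear L y w}"
  proof
    show "projection y ` {l \<in> L. x \<in> l} \<subseteq> {w. collinear L x w \<and> collinear L y w}"
    proof (rule image_subsetI)
      fix l assume "l \<in> {l \<in> L. x \<in> l}"
      then show "projection y l \<in> {w. collinear L x w \<and> collinear L y w}"
        using proj collinearI[of l L x "projection y l"] by auto
    qed
    show "{w. collinear L x w \<and> collinear L y w} \<subseteq> projection y ` {l \<in> L. x \<in> l}"
    proof
      fix w assume "w \<in> {w. collinear L x w \<and> collinear L y w}"
      then have xw: "collinear L x w" and yw: "collinear L y w" by auto
      obtain l where l: "l \<in> L" "x \<in> l" "w \<in> l" using xw by (rule collinearE)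
      moreover have "y \<notin> l" using xy collinearI[OF l(1,2)] by blast
      ultimately have "projection y l = w"
        using collinear_on_line_unique[OF l(1) _ _ l(3) _ yw] proj[of l] by blast
      then show "w \<in> projection y ` {l \<in> L. x \<in> l}" using l by blast
    qed
  qed
  ultimately show ?thesis using card_image card_lines_through[OF x] by fastforce
qed

lemma collinear_third_point_of_line:
  assumes m: "m \<in> L" "y \<in> m" "q \<in> m" "r \<in> m" "y \<noteq> q" "y \<noteq> r" "q \<noteq> r"
    and p: "p \<in> P" "\<not> collinear L p y" "\<not> collinear L p q"
  shows "collinear L p r"
proof -
  have "p \<notin> m" using p(2) collinearI[OF m(1) _ m(2)] by blast
  obtain s where s: "s \<in> m" "collinear L p s" using ex_collinear_on_line[OF m(1) p(1)] .
  have "m = {y, q, r}" using card_3_eq[OF card_line[OF m(1)]] m by blast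
  then have "s = r" using s p(2,3) by auto
  then show ?thesis using s(2) by simp
qed

lemma collinear_third_point_of_line_through_neighbour:
  assumes m: "m \<in> L" "y \<in> m" "q \<in> m" "r \<in> m" "y \<noteq> q" "y \<noteq> r" "q \<noteq> r"
    and l: "l \<in> L" "x \<in> l" "q \<notin> l" "collinear L q x"
    and p: "p \<in> l" "p \<noteq> x" "\<not> collinear L p y"
  shows "collinear L p r"
proof -
  have "\<not> collinear L p q"
    using collinear_on_line_unique[OF l(1,3,2) p(1) l(4)] p(2) by (auto simp: collinear_commute)
  moreover have "p \<in> P" using line_subset[OF l(1)] p(1) by blast
  ultimately show ?thesis using collinear_third_point_of_line[OF m] p(3) by blast
qed

lemma noncollinear_with_other_point_of_line:
  assumes "l \<in> L" "z \<in> l" "d \<in> l" "w \<in> l" "w \<noteq> d"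
    and "collinear L d t" "\<not> collinear L z t"
  shows "\<not> collinear L w t"
proof
  assume "collinear L w t"
  then have "collinear L t d" "collinear L t w" using assms(6) by (simp_all add: collinear_commute)
  moreover have "t \<notin> l" using assms(7) collinearI[OF assms(1,2)] by blast
  ultimately show False using collinear_on_line_unique[OF assms(1) _ assms(3,4)] assms(5) by blast
qed

lemma triad_has_centre:
  assumes x: "x \<in> P" and y: "y \<in> P" and z: "z \<in> P"
    and xy: "\<not> collinear L x y" and xz: "\<not> collinear L x z" and yz: "\<not> collinear L y z"
  shows "\<exists>c. collinear L c x \<and> collinear L c y \<and> collinear L c z"
proof (rule ccontr)
  \<comment> \<open>Project y onto a line l1 through x, giving q, and z onto the line m = yq, giving r.
    The projections of z onto the other two lines through x then both lie on the line zr,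
    which therefore contains x.\<close>
  assume "\<nexists>c. collinear L c x \<and> collinear L c y \<and> collinear L c z"
  then have no_centre: "\<not> collinear L c y" if "collinear L c x" "collinear L c z" for c
    using that by blast
  obtain l1 l2 l3 where lines: "{l \<in> L. x \<in> l} = {l1, l2, l3}" "l1 \<noteq> l2" "l2 \<noteq> l3" "l1 \<noteq> l3"
    using card_lines_through[OF x] unfolding card_3_iff by blast
  have "l1 \<in> {l \<in> L. x \<in> l}" "l2 \<in> {l \<in> L. x \<in> l}" "l3 \<in> {l \<in> L. x \<in> l}"
    unfolding lines(1) by simp_all
  then have l: "l1 \<in> L" "l2 \<in> L" "l3 \<in> L" "x \<in> l1" "x \<in> l2" "x \<in> l3" by simp_all
  obtain q where q: "q \<in> l1" "collinear L y q" using ex_collinear_on_line[OF l(1) y] .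
  obtain m where m: "m \<in> L" "y \<in> m" "q \<in> m" using q(2) by (rule collinearE)
  obtain r where r: "r \<in> m" "collinear L z r" using ex_collinear_on_line[OF m(1) z] .
  have qx: "collinear L q x" using collinearI[OF l(1) q(1) l(4)] .
  have "x \<noteq> q" "q \<noteq> y" using q(2) xy collinearI[OF l(1) l(4) q(1)] by (auto simp: collinear_commute)
  have "r \<noteq> y" using r(2) yz by (auto simp: collinear_commute)
  have "r \<noteq> q" using r(2) no_centre[OF qx] q(2) by (auto simp: collinear_commute)
  have to_r: "collinear L p r" if k: "k \<in> L" "x \<in> k" "k \<noteq> l1" and p: "p \<in> k" "collinear L z p"
    for k p
  proof -
    have "q \<notin> k"
      using line_eq_if_two_common_points[OF k(1) l(1) \<open>x \<noteq> q\<close> k(2) _ l(4) q(1)] k(3) by blast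
    moreover have "p \<noteq> x" using p(2) xz by (auto simp: collinear_commute)
    moreover have "\<not> collinear L p y" using no_centre collinearI[OF k(1) p(1) k(2)] p(2)
      by (auto simp: collinear_commute)
    ultimately show ?thesis
      using collinear_third_point_of_line_through_neighbour[OF m r(1) _ _ _ k(1,2) _ qx p(1)]
        \<open>q \<noteq> y\<close> \<open>r \<noteq> y\<close> \<open>r \<noteq> q\<close> by auto
  qed
  obtain p2 where p2: "p2 \<in> l2" "collinear L z p2" using ex_collinear_on_line[OF l(2) z] .
  obtain p3 where p3: "p3 \<in> l3" "collinear L z p3" using ex_collinear_on_line[OF l(3) z] .
  obtain n where n: "n \<in> L" "z \<in> n" "r \<in> n" using r(2) by (rule collinearE)
  have "z \<noteq> r" using r(1) m(2) yz collinearI[OF m(1)] by blast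
  have "p2 \<in> n" "p3 \<in> n"
    using mem_line_if_collinear_with_two[OF n \<open>z \<noteq> r\<close>] p2(2) p3(2)
      to_r[OF l(2,5) _ p2] to_r[OF l(3,6) _ p3] lines(2,4) by (auto simp: collinear_commute)
  moreover have "p2 \<noteq> p3"
  proof
    assume "p2 = p3"
    moreover have "x \<noteq> p2" using p2(2) xz by (auto simp: collinear_commute)
    ultimately show False
      using line_eq_if_two_common_points[OF l(2,3) _ l(5) p2(1) l(6)] lines(3) p3(1) by blast
  qed
  ultimately have "x \<in> n"
    using mem_line_if_collinear_with_two[OF n(1)]
      collinearI[OF l(2,5) p2(1)] collinearI[OF l(3,6) p3(1)]
    by blast
  then show False using xz collinearI[OF n(1) _ n(2)] by blast
qed

lemma ex_common_neighbour_of_three: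
  assumes "u \<in> P" "v \<in> P" "w \<in> P"
  obtains c where "collinear L c u" "collinear L c v" "collinear L c w"
proof -
  have on_line: "\<exists>c. collinear L c p \<and> collinear L c q \<and> collinear L c s"
    if pq: "collinear L p q" and s: "s \<in> P" for p q s
  proof -
    obtain m where m: "m \<in> L" "p \<in> m" "q \<in> m" using pq by (rule collinearE)
    obtain c where "c \<in> m" "collinear L s c" using ex_collinear_on_line[OF m(1) s] .
    then show ?thesis using collinearI[OF m(1) _ m(2)] collinearI[OF m(1) _ m(3)]
      by (auto simp: collinear_commute)
  qed
  have "\<exists>c. collinear L c u \<and> collinear L c v \<and> collinear L c w"
  proof (cases "collinear L u v \<or> collinear L u w \<or> collinear L v w")
    case True
    then show ?thesis using on_line[of u v w] on_line[of u w v] on_line[of v w u] assms by blast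
  next
    case False
    then show ?thesis using triad_has_centre assms by blast
  qed
  then show ?thesis using that by blast
qed

lemma no_four_noncollinear_neighbours:
  assumes "collinear L c w1" "collinear L c w2" "collinear L c w3" "collinear L c w4"
    and "\<not> collinear L w1 w2" "\<not> collinear L w1 w3" "\<not> collinear L w1 w4"
    and "\<not> collinear L w2 w3" "\<not> collinear L w2 w4" "\<not> collinear L w3 w4"
  shows False
proof -
  obtain l1 where l1: "l1 \<in> L" "c \<in> l1" "w1 \<in> l1" using assms(1) by (rule collinearE)
  obtain l2 where l2: "l2 \<in> L" "c \<in> l2" "w2 \<in> l2" using assms(2) by (rule collinearE)
  obtain l3 where l3: "l3 \<in> L" "c \<in> l3" "w3 \<in> l3" using assms(3) by (rule collinearE)
  obtain l4 where l4: "l4 \<in> L" "c \<in> l4" "w4 \<in> l4" using assms(4) by (rule collinearE)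
  have ne: "l \<noteq> l'" if "l \<in> L" "w \<in> l" "w' \<in> l'" "\<not> collinear L w w'" for l l' w w'
  proof
    assume "l = l'"
    then show False using that collinearI[of l L w w'] by simp
  qed
  have "card {l1, l2, l3, l4} = 4"
    using ne[OF l1(1,3) l2(3)] ne[OF l1(1,3) l3(3)] ne[OF l1(1,3) l4(3)]
      ne[OF l2(1,3) l3(3)] ne[OF l2(1,3) l4(3)] ne[OF l3(1,3) l4(3)] assms(5-10) by simp
  moreover have "{l1, l2, l3, l4} \<subseteq> {l \<in> L. c \<in> l}" using l1 l2 l3 l4 by blast
  moreover have "c \<in> P" using assms(1) by (rule collinear_in_P)
  then have "finite {l \<in> L. c \<in> l}" using card_lines_through by (intro card_ge_0_finite) simp
  ultimately have "4 \<le> card {l \<in> L. c \<in> l}" using card_mono by metis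
  then show False using card_lines_through[OF \<open>c \<in> P\<close>] by simp
qed

lemma collinear_third_common_neighbour:
  assumes xy: "\<not> collinear L x y"
    and a: "collinear L a x" "collinear L a y" and b: "collinear L b x" "collinear L b y"
    and c: "collinear L c x" "collinear L c y" and "a \<noteq> b" "a \<noteq> c" "b \<noteq> c"
    and z: "\<not> collinear L z x" "\<not> collinear L z y" "collinear L z a" "collinear L z b"
  shows "collinear L z c"
proof (rule ccontr)
  \<comment> \<open>Otherwise c meets the lines za and zb in their third points a' and b'. Together
    with x and y they would be four pairwise noncollinear neighbours of c, so a' and b' are
    collinear, and the line a'b' then contains both z and c.\<close>
  assume zc: "\<not> collinear L z c"
  have "c \<in> P" using c(1) by (rule collinear_in_P)
  have third: "\<exists>w. collinear L c w \<and> collinear L z w \<and> collinear L w d \<and> w \<noteq> z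
      \<and> \<not> collinear L w x \<and> \<not> collinear L w y"
    if d: "collinear L d x" "collinear L d y" "collinear L z d" "\<not> collinear L c d" for d
  proof -
    obtain n where n: "n \<in> L" "z \<in> n" "d \<in> n" using d(3) by (rule collinearE)
    have "z \<noteq> d" using d(1) z(1) by blast
    obtain w where w: "w \<in> n" "w \<noteq> z" "w \<noteq> d" using card_3_obtain_other[OF card_line[OF n(1)]] .
    have "collinear L c w"
      using collinear_third_point_of_line[OF n(1,2,3) w(1) \<open>z \<noteq> d\<close> w(2,3)[symmetric] \<open>c \<in> P\<close>]
        zc d(4) by (simp add: collinear_commute)
    moreover have "\<not> collinear L w x" "\<not> collinear L w y"
      using noncollinear_with_other_point_of_line[OF n w(1,3)] d(1,2) z(1,2) by blast+
    ultimately show ?thesis using collinearI[OF n(1) n(2) w(1)] collinearI[OF n(1) w(1) n(3)] w(2)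
      by blast
  qed
  have ab: "\<not> collinear L a b" and ac: "\<not> collinear L a c" and bc: "\<not> collinear L b c"
    using common_neighbours_noncollinear[OF xy] a b c \<open>a \<noteq> b\<close> \<open>a \<noteq> c\<close> \<open>b \<noteq> c\<close> by blast+
  obtain a' where a': "collinear L c a'" "collinear L z a'" "collinear L a' a" "a' \<noteq> z"
      "\<not> collinear L a' x" "\<not> collinear L a' y"
    using third[OF a z(3)] ac by (auto simp: collinear_commute)
  obtain b' where b': "collinear L c b'" "collinear L z b'" "collinear L b' b" "b' \<noteq> z"
      "\<not> collinear L b' x" "\<not> collinear L b' y"
    using third[OF b z(4)] bc by (auto simp: collinear_commute)
  have "collinear L a' b'"
    using no_four_noncollinear_neighbours[OF c(1,2) a'(1) b'(1) xy] a'(5,6) b'(5,6)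
    by (auto simp: collinear_commute)
  moreover have "a' \<noteq> b'"
    using common_neighbours_noncollinear[OF ab] a'(2,3) b'(2,3) z(3,4) a'(4)
    by (auto simp: collinear_commute)
  ultimately obtain k where k: "k \<in> L" "a' \<in> k" "b' \<in> k" by (auto elim: collinearE)
  have "z \<in> k" "c \<in> k"
    using mem_line_if_collinear_with_two[OF k \<open>a' \<noteq> b'\<close>] a'(1,2) b'(1,2) by simp_all
  then show False using zc collinearI[OF k(1)] by blast
qed

lemma ex_noncollinear_point:
  assumes x: "x \<in> P"
  obtains z where "z \<in> P" "\<not> collinear L x z"
proof -
  obtain l where l: "l \<in> L" "x \<in> l" using ex_line_through[OF x] .
  obtain y where y: "y \<in> l" "y \<noteq> x"
    using card_3_obtain_other[OF card_line[OF l(1)], of x x] by blast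
  have "y \<in> P" using line_subset[OF l(1)] y(1) by blast
  obtain m where m: "m \<in> {l \<in> L. y \<in> l}" "m \<noteq> l"
    using card_3_obtain_other[OF card_lines_through[OF \<open>y \<in> P\<close>], of l l] by blast
  then have "m \<in> L" "y \<in> m" by simp_all
  obtain z where z: "z \<in> m" "z \<noteq> y"
    using card_3_obtain_other[OF card_line[OF \<open>m \<in> L\<close>], of y y] by blast
  have "z \<notin> l"
  proof
    assume "z \<in> l"
    then have "l = m"
      using line_eq_if_two_common_points[OF l(1) \<open>m \<in> L\<close> z(2)] y(1) \<open>y \<in> m\<close> z(1) by blast
    then show False using m(2) by simp
  qed
  have "\<not> collinear L x z"
  proof
    assume "collinear L x z"
    then have "x = y"
      using collinear_on_line_unique[OF l(1) \<open>z \<notin> l\<close> l(2) y(1)] collinearI[OF \<open>m \<in> L\<close> z(1) \<open>y \<in> m\<close>]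
      by (simp add: collinear_commute)
    then show False using y(2) by simp
  qed
  moreover have "z \<in> P" using line_subset[OF \<open>m \<in> L\<close>] z(1) by blast
  ultimately show ?thesis using that by blast
qed

lemma perp_set_eq: "T \<subseteq> P \<Longrightarrow> perp_set P L T = {w \<in> P. \<forall>a\<in>T. collinear L a w}"
  unfolding perp_set_def perp_def using collinear_refl by auto

lemma perp_set_line:
  assumes l: "l \<in> L"
  shows "perp_set P L l = l"
proof -
  obtain p q where pq: "p \<in> l" "q \<in> l" "p \<noteq> q"
    using card_3_iff[THEN iffD1, OF card_line[OF l]] by blast
  have "{w \<in> P. \<forall>a\<in>l. collinear L a w} = l"
  proof
    show "{w \<in> P. \<forall>a\<in>l. collinear L a w} \<subseteq> l"
    proof
      fix w assume "w \<in> {w \<in> P. \<forall>a\<in>l. collinear L a w}"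
      then have "collinear L p w" "collinear L q w" using pq by blast+
      then show "w \<in> l"
        using mem_line_if_collinear_with_two[OF l pq] by (simp add: collinear_commute)
    qed
    show "l \<subseteq> {w \<in> P. \<forall>a\<in>l. collinear L a w}"
      using line_subset[OF l] collinearI[OF l] by blast
  qed
  then show ?thesis using perp_set_eq[OF line_subset[OF l]] by simp
qed

lemma line_through_collinear_pair:
  assumes "collinear L X A" "X \<noteq> A" "u \<noteq> b"
    and "collinear L u X" "collinear L u A" "collinear L b X" "collinear L b A"
  obtains Z c where "Z \<noteq> X" "Z \<noteq> A" "c \<noteq> u" "c \<noteq> b"
    and "{X, A, Z} \<in> L" and "perp_set P L {X, A, Z} = {u, b, c}"
proof -
  obtain l where l: "l \<in> L" "X \<in> l" "A \<in> l" using assms(1) by (rule collinearE)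
  obtain Z where Z: "Z \<in> l" "Z \<noteq> X" "Z \<noteq> A" using card_3_obtain_other[OF card_line[OF l(1)]] .
  have l_XAZ: "l = {X, A, Z}"
    using card_3_eq[OF card_line[OF l(1)] l(2,3) Z(1)] assms(2) Z(2,3) by blast
  have "u \<in> l" "b \<in> l" using mem_line_if_collinear_with_two[OF l assms(2)] assms(4-7) by simp_all
  obtain c where c: "c \<in> l" "c \<noteq> u" "c \<noteq> b" using card_3_obtain_other[OF card_line[OF l(1)]] .
  have "l = {u, b, c}"
    using card_3_eq[OF card_line[OF l(1)] \<open>u \<in> l\<close> \<open>b \<in> l\<close> c(1)] assms(3) c(2,3) by blast
  then show ?thesis using that[OF Z(2,3) c(2,3)] perp_set_line[OF l(1)] l(1) l_XAZ by simp
qed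

lemma complete_triad_through_noncollinear_pair:
  assumes XA: "\<not> collinear L X A" and "u \<noteq> b"
    and u: "collinear L u X" "collinear L u A" and b: "collinear L b X" "collinear L b A"
  obtains Z c where "Z \<noteq> X" "Z \<noteq> A" "c \<noteq> u" "c \<noteq> b"
    and "complete_triad P L {X, A, Z}" and "perp_set P L {X, A, Z} = {u, b, c}"
proof -
  have P: "X \<in> P" "A \<in> P" "u \<in> P" "b \<in> P" using u b collinear_in_P by blast+
  define N where "N = {w. collinear L X w \<and> collinear L A w}"
  have N3: "card N = 3" unfolding N_def using card_common_neighbours[OF P(1,2) XA] .
  have "u \<in> N" "b \<in> N" unfolding N_def using u b by (simp_all add: collinear_commute)
  obtain c where c: "c \<in> N" "c \<noteq> u" "c \<noteq> b" using card_3_obtain_other[OF N3] .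
  have N_eq: "N = {u, b, c}"
    using card_3_eq[OF N3 \<open>u \<in> N\<close> \<open>b \<in> N\<close> c(1) \<open>u \<noteq> b\<close>] c(2,3) by simp
  have cX: "collinear L c X" "collinear L c A"
    using c(1) unfolding N_def by (simp_all add: collinear_commute)
  have ub: "\<not> collinear L u b" using common_neighbours_noncollinear[OF XA u b \<open>u \<noteq> b\<close>] .
  obtain Z where Z: "Z \<in> {w. collinear L u w \<and> collinear L b w}" "Z \<noteq> X" "Z \<noteq> A"
    using card_3_obtain_other[OF card_common_neighbours[OF P(3,4) ub]] .
  then have Zu: "collinear L Z u" "collinear L Z b" by (simp_all add: collinear_commute)
  have ZX: "\<not> collinear L Z X" and ZA: "\<not> collinear L Z A"
    using common_neighbours_noncollinear[OF ub Zu] u b Z(2,3) by (simp_all add: collinear_commute)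
  have Zc: "collinear L Z c"
    using collinear_third_common_neighbour[OF XA u b cX \<open>u \<noteq> b\<close> c(2,3)[symmetric] ZX ZA Zu] .
  have "Z \<in> P" using Zu(1) by (rule collinear_in_P)
  have "{w \<in> P. \<forall>a\<in>{X, A, Z}. collinear L a w} = N \<inter> {w. collinear L Z w}"
    using collinear_in_P(2) unfolding N_def by blast
  also have "\<dots> = {u, b, c}" unfolding N_eq using Zu Zc by (auto simp: collinear_commute)
  finally have perp: "perp_set P L {X, A, Z} = {u, b, c}"
    using perp_set_eq[of "{X, A, Z}"] P(1,2) \<open>Z \<in> P\<close> by simp
  have "X \<noteq> A" using XA collinear_refl[OF P(1)] by blast
  then have "triad P L {X, A, Z}"
    unfolding triad_def using P(1,2) \<open>Z \<in> P\<close> XA ZX ZA Z(2,3)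
    by (auto simp: collinear_commute)
  moreover have "card (perp_set P L {X, A, Z}) = 3" using perp \<open>u \<noteq> b\<close> c(2,3) by simp
  ultimately have "complete_triad P L {X, A, Z}" unfolding complete_triad_def by blast
  then show ?thesis using that[OF Z(2,3) c(2,3) _ perp] by blast
qed

lemma line_or_complete_triad_through_pair:
  assumes "X \<noteq> A" "u \<noteq> b"
    and "collinear L u X" "collinear L u A" "collinear L b X" "collinear L b A"
  obtains Z c where "Z \<noteq> X" "Z \<noteq> A" "c \<noteq> u" "c \<noteq> b"
    and "{X, A, Z} \<in> L \<or> complete_triad P L {X, A, Z}"
    and "perp_set P L {X, A, Z} = {u, b, c}"
proof (cases "collinear L X A")
  case True
  obtain Z c where "Z \<noteq> X" "Z \<noteq> A" "c \<noteq> u" "c \<noteq> b" "{X, A, Z} \<in> L"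
    and "perp_set P L {X, A, Z} = {u, b, c}"
    using line_through_collinear_pair[OF True assms] .
  then show ?thesis using that by blast
next
  case False
  obtain Z c where "Z \<noteq> X" "Z \<noteq> A" "c \<noteq> u" "c \<noteq> b" "complete_triad P L {X, A, Z}"
    and "perp_set P L {X, A, Z} = {u, b, c}"
    using complete_triad_through_noncollinear_pair[OF False assms(2-)] .
  then show ?thesis using that by blast
qed

end

locale iso_gq = S': gq P' L'
  for P' :: "'b set" and L' :: "'b set set" +
  fixes P :: "'a set" and L :: "'a set set" and f :: "'a \<Rightarrow> 'b"
  assumes lines_subset: "l \<in> L \<Longrightarrow> l \<subseteq> P"
    and iso: "gq_iso f P L P' L'"
begin

lemma bij: "bij_betw f P P'"
  using iso unfolding gq_iso_def by blast

lemma image_lines: "(\<lambda>l. f ` l) ` L = L'"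
  using iso unfolding gq_iso_def by blast

lemma f_in: "x \<in> P \<Longrightarrow> f x \<in> P'"
  using bij by (rule bij_betw_apply)

lemma inj_f: "inj_on f P"
  using bij by (rule bij_betw_imp_inj_on)

lemma ex_preimage:
  assumes "u \<in> P'" obtains x where "x \<in> P" "f x = u"
  using assms bij_betw_imp_surj_on[OF bij] by blast

lemma collinear_image_iff:
  assumes "x \<in> P" "y \<in> P"
  shows "collinear L' (f x) (f y) \<longleftrightarrow> collinear L x y"
proof
  assume "collinear L x y"
  then obtain l where "l \<in> L" "x \<in> l" "y \<in> l" by (rule collinearE)
  moreover have "f ` l \<in> L'" using image_lines \<open>l \<in> L\<close> by blast
  ultimately show "collinear L' (f x) (f y)" by (blast intro: collinearI)
next
  assume "collinear L' (f x) (f y)"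
  then obtain l' where l': "l' \<in> L'" "f x \<in> l'" "f y \<in> l'" by (rule collinearE)
  then obtain l where l: "l \<in> L" "l' = f ` l" using image_lines by blast
  have "x \<in> l" "y \<in> l"
    using l l' lines_subset[OF l(1)] inj_onD[OF inj_f] assms by (auto simp: image_iff)
  then show "collinear L x y" using l(1) collinearI by metis
qed

lemma perp_image_iff:
  assumes "a \<in> P" "y \<in> P"
  shows "f y \<in> perp P' L' (f a) \<longleftrightarrow> y \<in> perp P L a"
  using assms collinear_image_iff f_in inj_onD[OF inj_f] unfolding perp_def by auto

lemma perp_set_image:
  assumes "T \<subseteq> P"
  shows "f ` perp_set P L T = perp_set P' L' (f ` T)"
proof
  show "f ` perp_set P L T \<subseteq> perp_set P' L' (f ` T)"
    using assms perp_image_iff f_in unfolding perp_set_def by fastforce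
  show "perp_set P' L' (f ` T) \<subseteq> f ` perp_set P L T"
  proof
    fix w assume w: "w \<in> perp_set P' L' (f ` T)"
    then obtain y where y: "y \<in> P" "f y = w" unfolding perp_set_def by (blast elim: ex_preimage)
    then have "y \<in> perp_set P L T" using w assms perp_image_iff unfolding perp_set_def by blast
    then show "w \<in> f ` perp_set P L T" using y(2) by blast
  qed
qed

lemma line_if_image_line:
  assumes "T \<subseteq> P" "f ` T \<in> L'"
  shows "T \<in> L"
proof -
  obtain l where "l \<in> L" "f ` T = f ` l" using assms(2) image_lines by blast
  then have "T = l" using inj_on_image_eq_iff[OF inj_f assms(1) lines_subset] by blast
  then show ?thesis using \<open>l \<in> L\<close> by simp
qed

lemma complete_triad_if_image:
  assumes T: "T \<subseteq> P" and ct: "complete_triad P' L' (f ` T)"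
  shows "complete_triad P L T"
proof -
  have inj: "inj_on f T" using inj_on_subset[OF inj_f T] .
  have "card T = 3" using ct card_image[OF inj] unfolding complete_triad_def triad_def by simp
  moreover have "\<not> collinear L a b" if "a \<in> T" "b \<in> T" "a \<noteq> b" for a b
  proof -
    have "f a \<noteq> f b" using inj_onD[OF inj] that by blast
    then have "\<not> collinear L' (f a) (f b)"
      using ct that unfolding complete_triad_def triad_def by blast
    then show ?thesis using collinear_image_iff T that by blast
  qed
  moreover have "card (perp_set P L T) = 3"
  proof -
    have "perp_set P L T \<subseteq> P" unfolding perp_set_def by blast
    then have "card (f ` perp_set P L T) = card (perp_set P L T)"
      using card_image inj_on_subset[OF inj_f] by blast
    then show ?thesis using ct perp_set_image[OF T] unfolding complete_triad_def by simp
  qed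
  ultimately show ?thesis using T unfolding complete_triad_def triad_def by blast
qed

abbreviation "CP \<equiv> calP f P P' L'"
abbreviation "BP \<equiv> bbP f P P' L'"
abbreviation "BL \<equiv> bbL f P L P' L'"
abbreviation "E \<equiv> coll_graph BP BL"

lemma mem_calP_iff: "(x, u) \<in> CP \<longleftrightarrow> x \<in> P \<and> collinear L' (f x) u"
  unfolding calP_def perp_def using S'.collinear_refl S'.collinear_in_P f_in by auto

lemma mem_bbP_iff [simp]:
  "BPair x u \<in> BP \<longleftrightarrow> (x, u) \<in> CP" "BLeft x \<in> BP \<longleftrightarrow> x \<in> P" "BRight u \<in> BP \<longleftrightarrow> u \<in> P'"
  unfolding bbP_def by auto

lemma special_line_edges:
  assumes "(x, u) \<in> CP"
  shows "(BLeft x, BPair x u) \<in> E" "(BPair x u, BRight u) \<in> E" "(BLeft x, BRight u) \<in> E"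
proof -
  have "{BLeft x, BPair x u, BRight u} \<in> BL" using assms unfolding bbL_def by blast
  moreover have "x \<in> P" "u \<in> P'" using assms S'.collinear_in_P(2) by (auto simp: mem_calP_iff)
  ultimately show "(BLeft x, BPair x u) \<in> E" "(BPair x u, BRight u) \<in> E" "(BLeft x, BRight u) \<in> E"
    using assms by (auto intro: coll_graphI)
qed

lemma mem_calLI:
  assumes "(x, u) \<in> CP" "(y, v) \<in> CP" "(z, w) \<in> CP" "x \<noteq> y" "x \<noteq> z" "y \<noteq> z"
    and "{x, y, z} \<in> L \<or> complete_triad P L {x, y, z}"
    and "u \<noteq> v" "u \<noteq> w" "v \<noteq> w" "{u, v, w} = perp_set P' L' (f ` {x, y, z})"
  shows "{(x, u), (y, v), (z, w)} \<in> calL f P L P' L'"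
  using assms unfolding calL_def by blast

lemma edge_Pair_Pair:
  assumes x: "x \<in> P" and a: "a \<in> P" and "x \<noteq> a" "u \<noteq> b"
    and col: "collinear L' u (f x)" "collinear L' u (f a)"
      "collinear L' b (f x)" "collinear L' b (f a)"
  shows "(BPair x u, BPair a b) \<in> E"
proof -
  have "f x \<noteq> f a" using inj_onD[OF inj_f] x a \<open>x \<noteq> a\<close> by blast
  obtain Z c where Z: "Z \<noteq> f x" "Z \<noteq> f a" and c: "c \<noteq> u" "c \<noteq> b"
    and line_or_triad: "{f x, f a, Z} \<in> L' \<or> complete_triad P' L' {f x, f a, Z}"
    and perp: "perp_set P' L' {f x, f a, Z} = {u, b, c}"
    using S'.line_or_complete_triad_through_pair[OF \<open>f x \<noteq> f a\<close> \<open>u \<noteq> b\<close> col] .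
  have "{f x, f a, Z} \<subseteq> P'"
    using line_or_triad S'.line_subset unfolding complete_triad_def triad_def by blast
  then obtain z where z: "z \<in> P" "f z = Z" using ex_preimage by blast
  have T: "{x, a, z} \<subseteq> P" and img: "f ` {x, a, z} = {f x, f a, Z}" using x a z by auto
  have "{x, a, z} \<in> L \<or> complete_triad P L {x, a, z}"
    using line_or_triad line_if_image_line[OF T] complete_triad_if_image[OF T] img by auto
  moreover have "(z, c) \<in> CP"
  proof -
    have "c \<in> perp_set P' L' {f x, f a, Z}" using perp by simp
    then have "collinear L' Z c" using S'.perp_set_eq[OF \<open>{f x, f a, Z} \<subseteq> P'\<close>] by blast
    then show ?thesis using z by (simp add: mem_calP_iff)
  qed
  moreover have xu: "(x, u) \<in> CP" and ab: "(a, b) \<in> CP"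
    using x a col by (simp_all add: mem_calP_iff collinear_commute)
  moreover have "x \<noteq> z" "a \<noteq> z" using z Z by auto
  ultimately have "{(x, u), (a, b), (z, c)} \<in> calL f P L P' L'"
    using mem_calLI \<open>x \<noteq> a\<close> \<open>u \<noteq> b\<close> c perp img by simp
  then have "(\<lambda>(x, y). BPair x y) ` {(x, u), (a, b), (z, c)} \<in> BL" unfolding bbL_def by blast
  moreover have "BPair x u \<noteq> BPair a b" using \<open>u \<noteq> b\<close> by simp
  ultimately show ?thesis using xu ab by (intro coll_graphI) auto
qed

lemma BLeft_neighbour:
  assumes "(BLeft x, q) \<in> E"
  obtains v where "(x, v) \<in> CP" "q = BPair x v \<or> q = BRight v"
  using assms unfolding coll_graph_def collinear_def bbL_def by auto

lemma BRight_neighbour: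
  assumes "(q, BRight u) \<in> E"
  obtains y where "(y, u) \<in> CP" "q = BPair y u \<or> q = BLeft y"
  using assms unfolding coll_graph_def collinear_def bbL_def by auto

lemma not_dist_le_2_BLeft_BRight:
  assumes "\<not> collinear L' (f x) u"
  shows "\<not> dist_le E 2 (BLeft x) (BRight u)"
proof
  have "(x, u) \<notin> CP" using assms by (simp add: mem_calP_iff)
  assume "dist_le E 2 (BLeft x) (BRight u)"
  then obtain k where "k \<le> 2" "(BLeft x, BRight u) \<in> E ^^ k" unfolding dist_le_def by blast
  then consider "(BLeft x, BRight u) \<in> E ^^ 0" | "(BLeft x, BRight u) \<in> E"
    | q where "(BLeft x, q) \<in> E" "(q, BRight u) \<in> E"
    by (auto simp: le_Suc_eq numeral_2_eq_2 elim!: relpow_Suc_E)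
  then show False
  proof cases
    case 1
    then show False by simp
  next
    case 2
    then show False using \<open>(x, u) \<notin> CP\<close> by (auto elim: BLeft_neighbour)
  next
    case 3
    then show False using \<open>(x, u) \<notin> CP\<close> by (auto elim!: BLeft_neighbour BRight_neighbour)
  qed
qed

lemma sym_E: "sym E"
  by (rule sym_coll_graph)

lemma dist_le_BLeft_BLeft:
  assumes "x \<in> P" "y \<in> P"
  shows "dist_le E 2 (BLeft x) (BLeft y)"
proof -
  obtain w where "collinear L' (f x) w" "collinear L' (f y) w"
    using S'.ex_common_neighbour[OF f_in f_in] assms .
  then have "(x, w) \<in> CP" "(y, w) \<in> CP" using assms by (simp_all add: mem_calP_iff)
  then have "(BLeft x, BRight w) \<in> E" "(BRight w, BLeft y) \<in> E"
    using special_line_edges(3) symD[OF sym_E] by blast+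
  then show ?thesis by (rule dist_le_path2)
qed

lemma dist_le_BRight_BRight:
  assumes "u \<in> P'" "v \<in> P'"
  shows "dist_le E 2 (BRight u) (BRight v)"
proof -
  obtain w where "collinear L' u w" "collinear L' v w" using S'.ex_common_neighbour[OF assms] .
  moreover obtain y where "y \<in> P" "f y = w"
    using S'.collinear_in_P(2)[OF calculation(1)] by (rule ex_preimage)
  ultimately have "(y, u) \<in> CP" "(y, v) \<in> CP" by (simp_all add: mem_calP_iff collinear_commute)
  then have "(BRight u, BLeft y) \<in> E" "(BLeft y, BRight v) \<in> E"
    using special_line_edges(3) symD[OF sym_E] by blast+
  then show ?thesis by (rule dist_le_path2)
qed

lemma dist_le_BPair_BPair:
  assumes xu: "(x, u) \<in> CP" and yv: "(y, v) \<in> CP"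
  shows "dist_le E 3 (BPair x u) (BPair y v)"
proof (cases "(x, v) \<in> CP \<or> (y, u) \<in> CP")
  case True
  then show ?thesis
  proof
    assume "(x, v) \<in> CP"
    then have "(BPair x u, BLeft x) \<in> E" "(BLeft x, BRight v) \<in> E" "(BRight v, BPair y v) \<in> E"
      using special_line_edges xu yv symD[OF sym_E] by blast+
    then show ?thesis by (rule dist_le_path3)
  next
    assume "(y, u) \<in> CP"
    then have "(BPair x u, BRight u) \<in> E" "(BRight u, BLeft y) \<in> E" "(BLeft y, BPair y v) \<in> E"
      using special_line_edges xu yv symD[OF sym_E] by blast+
    then show ?thesis by (rule dist_le_path3)
  qed
next
  case False
  have x: "x \<in> P" "collinear L' (f x) u" and y: "y \<in> P" "collinear L' (f y) v"
    using xu yv by (simp_all add: mem_calP_iff)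
  have xv: "\<not> collinear L' (f x) v" and yu: "\<not> collinear L' (f y) u"
    using False x(1) y(1) by (simp_all add: mem_calP_iff)
  obtain b where b: "collinear L' b (f x)" "collinear L' b (f y)"
    using S'.ex_common_neighbour[OF f_in f_in] x(1) y(1) by (metis collinear_commute)
  have "u \<in> P'" "v \<in> P'" "b \<in> P'" using x(2) y(2) b(1) S'.collinear_in_P by blast+
  then obtain a' where a': "collinear L' a' u" "collinear L' a' v" "collinear L' a' b"
    by (rule S'.ex_common_neighbour_of_three)
  obtain a where a: "a \<in> P" "f a = a'" using S'.collinear_in_P(1)[OF a'(1)] by (rule ex_preimage)
  have "x \<noteq> a" "a \<noteq> y" using a a'(1,2) xv yu by auto
  moreover have "u \<noteq> b" "b \<noteq> v" using b xv yu by (auto simp: collinear_commute)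
  ultimately have "(BPair x u, BPair a b) \<in> E" "(BPair a b, BPair y v) \<in> E"
    using edge_Pair_Pair x(1) a(1) y(1) x(2) y(2) a' b a(2)
    by (simp_all add: collinear_commute)
  then have "dist_le E 2 (BPair x u) (BPair y v)" by (rule dist_le_path2)
  then show ?thesis by (rule dist_le_mono) simp
qed

lemma ex_BLeft_near:
  assumes "q \<in> BP"
  shows "\<exists>y\<in>P. dist_le E 1 (BLeft y) q"
proof (cases q)
  case (BPair y v)
  then have "(y, v) \<in> CP" using assms by simp
  then have "y \<in> P" "dist_le E 1 (BLeft y) q"
    using BPair dist_le_edge[OF special_line_edges(1)] by (simp_all add: mem_calP_iff)
  then show ?thesis by blast
next
  case (BLeft y)
  then have "y \<in> P" "dist_le E 1 (BLeft y) q" using assms dist_le_refl by simp_all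
  then show ?thesis by blast
next
  case (BRight v)
  then have "v \<in> P'" using assms by simp
  then obtain y where y: "y \<in> P" "f y = v" by (rule ex_preimage)
  then have "(y, v) \<in> CP" using S'.collinear_refl[OF f_in[OF y(1)]] by (simp add: mem_calP_iff)
  then have "dist_le E 1 (BLeft y) q" using BRight dist_le_edge[OF special_line_edges(3)] by simp
  then show ?thesis using \<open>y \<in> P\<close> by blast
qed

lemma ex_BRight_near:
  assumes "q \<in> BP"
  shows "\<exists>v\<in>P'. dist_le E 1 (BRight v) q"
proof (cases q)
  case (BPair y v)
  then have "(y, v) \<in> CP" using assms by simp
  then have "collinear L' (f y) v" by (simp add: mem_calP_iff)
  then have "v \<in> P'" by (rule S'.collinear_in_P(2))
  moreover have "dist_le E 1 (BRight v) q"
    using BPair dist_le_edge[OF symD[OF sym_E special_line_edges(2)[OF \<open>(y, v) \<in> CP\<close>]]] by simp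
  ultimately show ?thesis by blast
next
  case (BLeft y)
  then have "y \<in> P" using assms by simp
  then have "(y, f y) \<in> CP" using S'.collinear_refl[OF f_in] by (simp add: mem_calP_iff)
  then have "dist_le E 1 (BRight (f y)) q"
    using BLeft dist_le_edge[OF symD[OF sym_E special_line_edges(3)]] by simp
  then show ?thesis using f_in[OF \<open>y \<in> P\<close>] by blast
next
  case (BRight v)
  then have "v \<in> P'" "dist_le E 1 (BRight v) q" using assms dist_le_refl by simp_all
  then show ?thesis by blast
qed

lemma dist_le_3_from_BLeft:
  assumes "x \<in> P" "q \<in> BP"
  shows "dist_le E 3 (BLeft x) q"
proof -
  obtain y where "y \<in> P" "dist_le E 1 (BLeft y) q" using ex_BLeft_near[OF assms(2)] by blast
  then show ?thesis using dist_le_trans[OF dist_le_BLeft_BLeft[OF assms(1)]] by simp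
qed

lemma dist_le_3_from_BRight:
  assumes "u \<in> P'" "q \<in> BP"
  shows "dist_le E 3 (BRight u) q"
proof -
  obtain v where "v \<in> P'" "dist_le E 1 (BRight v) q" using ex_BRight_near[OF assms(2)] by blast
  then show ?thesis using dist_le_trans[OF dist_le_BRight_BRight[OF assms(1)]] by simp
qed

lemma dist_le_3:
  assumes p: "p \<in> BP" and q: "q \<in> BP"
  shows "dist_le E 3 p q"
proof (cases p)
  case (BLeft x)
  then show ?thesis using p q dist_le_3_from_BLeft by simp
next
  case (BRight u)
  then show ?thesis using p q dist_le_3_from_BRight by simp
next
  case (BPair x u)
  then have "(x, u) \<in> CP" using p by simp
  then show ?thesis
    using BPair q dist_le_BPair_BPair dist_le_3_from_BLeft dist_le_3_from_BRight
      dist_le_sym[OF sym_E] by (cases q) auto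
qed

end

theorem corollary4p5:
  fixes P :: "'a set" and L :: "'a set set" and P' :: "'b set" and L' :: "'b set set"
    and f :: "'a \<Rightarrow> 'b"
  assumes "gq22 P L" and "gq22 P' L'" and "gq_iso f P L P' L'"
  shows "graph_connected (bbP f P P' L') (coll_graph (bbP f P P' L') (bbL f P L P' L'))
       \<and> graph_diameter (bbP f P P' L') (coll_graph (bbP f P P' L') (bbL f P L P' L')) 3"
proof -
  interpret iso_gq P' L' P L f
    using assms gq.line_subset[of P L] by unfold_locales (simp_all add: gq_def)
  obtain x where x: "x \<in> P" using assms(1) unfolding gq22_def by blast
  obtain u where u: "u \<in> P'" "\<not> collinear L' (f x) u"
    using S'.ex_noncollinear_point[OF f_in[OF x]] .
  have "\<not> dist_le E (3 - 1) (BLeft x) (BRight u)" using not_dist_le_2_BLeft_BRight[OF u(2)] by simp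
  then show ?thesis
    unfolding graph_diameter_def using graph_connected_if_dist_le dist_le_3 x u(1)
    by (metis mem_bbP_iff(2,3))
qed

end
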